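(* Let $p$ be an odd prime and fix $\beta\in(1/p,1)$. Let $a_1,\dots,a_N\in\mathsf H$ with $a_j=(v_j,z_j)$, and let $\mu_W=N^{-1}\sum_{j}\delta_{v_j}$. Suppose $\mu_W(L)\le\beta$ for every hyperplane $L\le W$. Let $\nu=\frac1N\sum_{j=1}^Nu_{\langle a_j\rangle}$, where $u_{\langle a_j\rangle}$ is the uniform measure on the cyclic subgroup generated by $a_j$. Then the kernel $K=\frac12(R_\nu+L_\nu)$ on $\mathsf H$ has spectral gap, with respect to the uniform measure on $\mathsf H$, at least \[ \gamma_{p,\beta}=\min\left\{1-\beta,\ \frac{(1-\beta)^2}{2}(1-p^{-1/2})\right\}>0. \]
   Context: $W$ is a vector space of dimension $2m\ge2$ over $\mathbb F_p$ with a nondegenerate alternating bilinear form $\omega$; $\mathsf H=W\times\mathbb F_p$ with multiplication $(v,z)(w,t)=(v+w,\,z+t+\tfrac12\omega(v,w))$, $\tfrac12$ being the inverse of $2$ in $\mathbb F_p$. For a probability measure $\nu$ on $\mathsf H$, $R_\nu f(x)=\sum_{g}\nu(g)f(xg)$ and $L_\nu f(x)=\sum_g\nu(g)f(gx)$. The spectral gap of a reversible kernel $K$ with stationary law $\rho$ is the largest $\gamma$ with $\gamma\operatorname{Var}_\rho(f)\le\frac12\sum_{x,y}\rho(x)K(x,y)(f(x)-f(y))^2$ for all real $f$. *)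

theory Defs
  imports "HOL-Analysis.Analysis" "HOL-Library.Function_Algebras" "Berlekamp_Zassenhaus.Finite_Field"
begin

type_synonym ('n, 'p) vecW = "'n \<Rightarrow> 'p mod_ring"
type_synonym ('n, 'p) heis = "('n \<Rightarrow> 'p mod_ring) \<times> 'p mod_ring"

definition alt_form :: "(('n::finite, 'p::prime_card) vecW \<Rightarrow> ('n, 'p) vecW \<Rightarrow> 'p mod_ring) \<Rightarrow> bool" where
  "alt_form \<omega> \<longleftrightarrow>
     (\<forall>u v w. \<omega> (u + v) w = \<omega> u w + \<omega> v w) \<and>
     (\<forall>c v w. \<omega> (\<lambda>i. c * v i) w = c * \<omega> v w) \<and>
     (\<forall>u v w. \<omega> u (v + w) = \<omega> u v + \<omega> u w) \<and>
     (\<forall>c v w. \<omega> v (\<lambda>i. c * w i) = c * \<omega> v w) \<and>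
     (\<forall>v. \<omega> v v = 0) \<and>
     (\<forall>v. (\<forall>w. \<omega> v w = 0) \<longrightarrow> v = 0)"

definition hmul :: "(('n::finite, 'p::prime_card) vecW \<Rightarrow> ('n, 'p) vecW \<Rightarrow> 'p mod_ring)
    \<Rightarrow> ('n, 'p) heis \<Rightarrow> ('n, 'p) heis \<Rightarrow> ('n, 'p) heis" where
  "hmul \<omega> x y = (fst x + fst y, snd x + snd y + inverse 2 * \<omega> (fst x) (fst y))"

fun hpow :: "(('n::finite, 'p::prime_card) vecW \<Rightarrow> ('n, 'p) vecW \<Rightarrow> 'p mod_ring)
    \<Rightarrow> ('n, 'p) heis \<Rightarrow> nat \<Rightarrow> ('n, 'p) heis" where
  "hpow \<omega> a 0 = (0, 0)"
| "hpow \<omega> a (Suc k) = hmul \<omega> a (hpow \<omega> a k)"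

text \<open>The cyclic subgroup generated by a (H is finite, so positive powers suffice).\<close>
definition cyc :: "(('n::finite, 'p::prime_card) vecW \<Rightarrow> ('n, 'p) vecW \<Rightarrow> 'p mod_ring)
    \<Rightarrow> ('n, 'p) heis \<Rightarrow> ('n, 'p) heis set" where
  "cyc \<omega> a = range (hpow \<omega> a)"

definition unif :: "'a set \<Rightarrow> 'a \<Rightarrow> real" where
  "unif S g = (if g \<in> S then 1 / real (card S) else 0)"

definition subspW :: "('n::finite, 'p::prime_card) vecW set \<Rightarrow> bool" where
  "subspW L \<longleftrightarrow> 0 \<in> L \<and> (\<forall>u\<in>L. \<forall>v\<in>L. u + v \<in> L) \<and> (\<forall>c. \<forall>v\<in>L. (\<lambda>i. c * v i) \<in> L)"

definition hyperplaneW :: "('n::finite, 'p::prime_card) vecW set \<Rightarrow> bool" where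
  "hyperplaneW L \<longleftrightarrow> subspW L \<and> L \<noteq> UNIV \<and>
     (\<forall>M. subspW M \<and> L \<subseteq> M \<longrightarrow> M = L \<or> M = UNIV)"

text \<open>Right and left convolution kernels: R_nu f x = sum_g nu g f(xg), L_nu f x = sum_g nu g f(gx).\<close>
definition Rker :: "('a \<Rightarrow> 'a \<Rightarrow> 'a) \<Rightarrow> ('a \<Rightarrow> real) \<Rightarrow> 'a \<Rightarrow> 'a \<Rightarrow> real" where
  "Rker mul \<nu> x y = (\<Sum>g\<in>{g. mul x g = y}. \<nu> g)"

definition Lker :: "('a \<Rightarrow> 'a \<Rightarrow> 'a) \<Rightarrow> ('a \<Rightarrow> real) \<Rightarrow> 'a \<Rightarrow> 'a \<Rightarrow> real" where
  "Lker mul \<nu> x y = (\<Sum>g\<in>{g. mul g x = y}. \<nu> g)"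

definition variance_wrt :: "('a::finite \<Rightarrow> real) \<Rightarrow> ('a \<Rightarrow> real) \<Rightarrow> real" where
  "variance_wrt \<rho> f = (\<Sum>x\<in>UNIV. \<rho> x * (f x - (\<Sum>y\<in>UNIV. \<rho> y * f y))\<^sup>2)"

definition dirichlet :: "('a::finite \<Rightarrow> 'a \<Rightarrow> real) \<Rightarrow> ('a \<Rightarrow> real) \<Rightarrow> ('a \<Rightarrow> real) \<Rightarrow> real" where
  "dirichlet K \<rho> f = (1/2) * (\<Sum>x\<in>UNIV. \<Sum>y\<in>UNIV. \<rho> x * K x y * (f x - f y)\<^sup>2)"

definition spectral_gap :: "('a::finite \<Rightarrow> 'a \<Rightarrow> real) \<Rightarrow> ('a \<Rightarrow> real) \<Rightarrow> real" where
  "spectral_gap K \<rho> = Sup {\<gamma>. \<forall>f. \<gamma> * variance_wrt \<rho> f \<le> dirichlet K \<rho> f}"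

end

theory Submission
  imports Defs
begin

text \<open>
  The Dirichlet form of \<open>K\<close> averages the energies \<open>\<Sum>x. \<Sum>t. (f x - f (x \<cdot> a\<^sub>j\<^sup>t))\<^sup>2\<close> of \<open>f\<close>
  and of \<open>f \<circ> uminus\<close> along the cosets of the cyclic groups \<open>\<langle>a\<^sub>j\<rangle>\<close>.  Split \<open>f\<close> minus its mean
  into its averages over the fibres of \<open>H \<rightarrow> W\<close> and a remainder with zero fibre sums: the two
  parts stay orthogonal under right translations, so their energies add.  The first part is a
  function on the abelian group \<open>W\<close>, and the mass condition bounds its energy below by
  \<open>2 p N (1 - \<beta>)\<close> times its squared norm.  For the remainder, if \<open>\<omega> v\<^sub>i v\<^sub>j \<noteq> 0\<close> then the
  commutators of powers of \<open>a\<^sub>i\<close> and \<open>a\<^sub>j\<close> run through the whole centre, so \<open>a\<^sub>i\<close>-invariant and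
  \<open>a\<^sub>j\<close>-invariant functions with zero fibre sums are almost orthogonal (cosine at most
  \<open>p powr (-1/2)\<close>) and the two energies together are at least \<open>2 p (1 - p powr (-1/2))\<close> times
  the squared norm.  Hence the indices of small energy are pairwise \<open>\<omega>\<close>-orthogonal, lie in a
  hyperplane and carry mass at most \<open>\<beta>\<close>.  The resulting gap
  \<open>min (1 - \<beta>) ((1 - \<beta>) (1 - p powr (-1/2)) / 2)\<close> dominates the claimed one.
\<close>

lemma sum_UNIV_add_const:
  "(\<Sum>t\<in>UNIV. F (t + c)) = (\<Sum>t\<in>(UNIV::'a::{ab_group_add,finite} set). F t)"
  by (rule sum.reindex_bij_betw, rule bij_betwI[where g="\<lambda>t. t - c"]) auto

lemma sum_UNIV_uminus:
  "(\<Sum>t\<in>UNIV. F (- t)) = (\<Sum>t\<in>(UNIV::'a::{ab_group_add,finite} set). F t)"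
  by (rule sum.reindex_bij_betw, rule bij_betwI[where g=uminus]) auto

lemma sum_UNIV_mult_const:
  "(c::'a::{field,finite}) \<noteq> 0 \<Longrightarrow> (\<Sum>t\<in>UNIV. F (c * t)) = (\<Sum>t\<in>UNIV. F t)"
  by (rule sum.reindex_bij_betw, rule bij_betwI[where g="\<lambda>t. t / c"]) auto

lemma sum_UNIV_prod:
  "(\<Sum>x\<in>UNIV. F x) = (\<Sum>v\<in>UNIV. \<Sum>s\<in>UNIV. F (v, s))"
  for F :: "'a::finite \<times> 'b::finite \<Rightarrow> 'c::comm_monoid_add"
  by (simp add: sum.cartesian_product)

definition l2_inner :: "('a::finite \<Rightarrow> real) \<Rightarrow> ('a \<Rightarrow> real) \<Rightarrow> real" where
  "l2_inner f g = (\<Sum>x\<in>UNIV. f x * g x)"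

lemma l2_inner_self_nonneg: "l2_inner f f \<ge> 0"
  unfolding l2_inner_def by (rule sum_nonneg) simp

lemma l2_inner_add_right: "l2_inner f (g + h) = l2_inner f g + l2_inner f h"
  by (simp add: l2_inner_def distrib_left sum.distrib)

lemma l2_inner_add_self:
  "l2_inner (g + h) (g + h) = l2_inner g g + l2_inner h h + 2 * l2_inner g h"
  by (simp add: l2_inner_def algebra_simps sum.distrib sum_distrib_left)

lemma l2_inner_Cauchy_Schwarz: "(l2_inner f g)\<^sup>2 \<le> l2_inner f f * l2_inner g g"
  using Cauchy_Schwarz_ineq_sum[of f g UNIV] by (simp add: l2_inner_def power2_eq_square)

lemma l2_inner_reindex: "bij h \<Longrightarrow> l2_inner (f \<circ> h) (g \<circ> h) = l2_inner f g"
  unfolding l2_inner_def comp_def by (rule sum.reindex_bij_betw)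

lemma sum_le_of_almost_orthogonal:
  fixes p s A B C F :: real
  assumes p: "p > 0" and s: "s \<ge> 0" "s\<^sup>2 = 1 / p" and A: "A \<ge> 0" and B: "B \<ge> 0"
    and F0: "F \<ge> 0" and C: "C\<^sup>2 \<le> A * B / p" and F: "(A + B)\<^sup>2 \<le> p\<^sup>2 * F * (A + B + 2 * C)"
  shows "A + B \<le> p\<^sup>2 * (1 + s) * F"
proof -
  have AB: "4 * (A * B) \<le> (A + B)\<^sup>2"
    using sum_squares_ge_zero[of "A - B" 0] by (simp add: power2_eq_square algebra_simps)
  have "(2 * C)\<^sup>2 = 4 * C\<^sup>2" by (simp add: power2_eq_square)
  also have "\<dots> \<le> 4 * (A * B) / p" using C by simp
  also have "\<dots> \<le> (A + B)\<^sup>2 / p" using AB p by (simp add: divide_right_mono)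
  also have "\<dots> = (s * (A + B))\<^sup>2" using s by (simp add: power_mult_distrib)
  finally have "2 * C \<le> s * (A + B)"
    using s A B by (intro power2_le_imp_le[of "2 * C"]) auto
  then have "p\<^sup>2 * F * (A + B + 2 * C) \<le> p\<^sup>2 * F * ((1 + s) * (A + B))"
    using F0 by (intro mult_left_mono) (auto simp: algebra_simps)
  with F have "(A + B)\<^sup>2 \<le> (p\<^sup>2 * (1 + s) * F) * (A + B)"
    by (simp add: mult_ac)
  then show ?thesis
    using A B F0 p s by (cases "A + B = 0") (auto simp: power2_eq_square mult_le_cancel_right)
qed


definition demean :: "('a::finite \<Rightarrow> real) \<Rightarrow> 'a \<Rightarrow> real" where
  "demean f x = f x - (\<Sum>y\<in>UNIV. f y) / real CARD('a)"

lemma sum_demean: "(\<Sum>x\<in>UNIV. demean f x) = 0"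
  by (simp add: demean_def sum_subtractf)

lemma demean_reindex: "bij h \<Longrightarrow> demean (f \<circ> h) = demean f \<circ> h"
  for h :: "'a::finite \<Rightarrow> 'a"
  by (simp add: demean_def fun_eq_iff sum.reindex_bij_betw)

lemma variance_wrt_uniform:
  "variance_wrt (\<lambda>_. 1 / real CARD('a)) f = l2_inner (demean f) (demean f) / real CARD('a)"
  for f :: "'a::finite \<Rightarrow> real"
  by (simp add: variance_wrt_def l2_inner_def demean_def power2_eq_square
      sum_divide_distrib[symmetric] sum_distrib_left)

lemma variance_wrt_uniform_indicator_pos:
  fixes x :: "'a::finite"
  assumes "CARD('a) \<ge> 2"
  shows "variance_wrt (\<lambda>_. 1 / real CARD('a)) (indicator {x}) > 0"
proof -
  have "demean (indicator {x}) x = 1 - 1 / real CARD('a)"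
    by (simp add: demean_def indicator_def)
  also have "\<dots> > 0" using assms by simp
  finally have "0 < (demean (indicator {x}) x)\<^sup>2" by simp
  also have "\<dots> \<le> l2_inner (demean (indicator {x})) (demean (indicator {x}))"
    unfolding l2_inner_def power2_eq_square by (rule member_le_sum) auto
  finally show ?thesis by (simp add: variance_wrt_uniform)
qed

lemma spectral_gap_ge:
  assumes poincare: "\<And>f. \<gamma> * variance_wrt \<rho> f \<le> dirichlet K \<rho> f"
    and pos: "variance_wrt \<rho> f0 > 0"
  shows "\<gamma> \<le> spectral_gap K \<rho>"
  unfolding spectral_gap_def
proof (rule cSup_upper)
  show "\<gamma> \<in> {\<gamma>. \<forall>f. \<gamma> * variance_wrt \<rho> f \<le> dirichlet K \<rho> f}" using poincare by blast
  show "bdd_above {\<gamma>. \<forall>f. \<gamma> * variance_wrt \<rho> f \<le> dirichlet K \<rho> f}"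
    using pos by (intro bdd_aboveI[where M="dirichlet K \<rho> f0 / variance_wrt \<rho> f0"])
      (auto simp: pos_le_divide_eq)
qed

lemma sum_unif: "finite S \<Longrightarrow> (\<Sum>g\<in>UNIV. unif S g * F g) = sum F S / real (card S)"
  for F :: "'a::finite \<Rightarrow> real"
proof -
  assume "finite S"
  have "(\<Sum>g\<in>UNIV. unif S g * F g) = (\<Sum>g\<in>UNIV. if g \<in> S then F g / real (card S) else 0)"
    by (rule sum.cong) (auto simp: unif_def)
  then show ?thesis by (simp add: sum.If_cases sum_divide_distrib)
qed

section \<open>Functions constant, or summing to zero, along the fibres of a product\<close>

definition fibre_const :: "('v \<times> 'z \<Rightarrow> real) \<Rightarrow> bool" where
  "fibre_const f \<longleftrightarrow> (\<forall>v s t. f (v, s) = f (v, t))"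

definition fibre_sum_zero :: "('v \<times> 'z::finite \<Rightarrow> real) \<Rightarrow> bool" where
  "fibre_sum_zero f \<longleftrightarrow> (\<forall>v. (\<Sum>s\<in>UNIV. f (v, s)) = 0)"

definition fibre_mean :: "('v \<times> 'z::finite \<Rightarrow> real) \<Rightarrow> 'v \<times> 'z \<Rightarrow> real" where
  "fibre_mean f x = (\<Sum>s\<in>UNIV. f (fst x, s)) / real CARD('z)"

lemma fibre_const_fibre_mean: "fibre_const (fibre_mean f)"
  by (simp add: fibre_const_def fibre_mean_def)

lemma fibre_sum_zero_diff_fibre_mean: "fibre_sum_zero (f - fibre_mean f)"
  by (simp add: fibre_sum_zero_def fibre_mean_def sum_subtractf)

lemma sum_fibre_mean: "(\<Sum>x\<in>UNIV. fibre_mean f x) = (\<Sum>x\<in>UNIV. f x)"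
  for f :: "'v::finite \<times> 'z::finite \<Rightarrow> real"
  unfolding sum_UNIV_prod[of "fibre_mean f"] sum_UNIV_prod[of f]
  by (simp add: fibre_mean_def)

lemma fibre_const_diff: "fibre_const f \<Longrightarrow> fibre_const g \<Longrightarrow> fibre_const (f - g)"
  unfolding fibre_const_def fun_diff_def by metis

lemma fibre_sum_zero_diff: "fibre_sum_zero f \<Longrightarrow> fibre_sum_zero g \<Longrightarrow> fibre_sum_zero (f - g)"
  by (simp add: fibre_sum_zero_def sum_subtractf)

lemma l2_inner_fibre_const_fibre_sum_zero:
  fixes u w :: "'v::finite \<times> 'z::finite \<Rightarrow> real"
  assumes u: "fibre_const u" and w: "fibre_sum_zero w"
  shows "l2_inner u w = 0"
proof -
  define u0 where "u0 v = u (v, undefined)" for v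
  have "u (v, s) = u0 v" for v s
    using u unfolding fibre_const_def u0_def by blast
  then have "l2_inner u w = (\<Sum>v\<in>UNIV. u0 v * (\<Sum>s\<in>UNIV. w (v, s)))"
    unfolding l2_inner_def sum_UNIV_prod[of "\<lambda>x. u x * w x"] by (simp add: sum_distrib_left)
  then show ?thesis
    using w by (simp add: fibre_sum_zero_def)
qed

lemma l2_inner_add_self_fibre_orthogonal:
  "fibre_const u \<Longrightarrow> fibre_sum_zero w \<Longrightarrow> l2_inner (u + w) (u + w) = l2_inner u u + l2_inner w w"
  by (simp add: l2_inner_add_self l2_inner_fibre_const_fibre_sum_zero)

definition vscale :: "'a::times \<Rightarrow> ('n \<Rightarrow> 'a) \<Rightarrow> 'n \<Rightarrow> 'a" where
  "vscale c v = (\<lambda>i. c * v i)"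

lemma vscale_add_left: "vscale (c + d::'a::comm_ring) v = vscale c v + vscale d v"
  by (simp add: vscale_def fun_eq_iff algebra_simps)

lemma vscale_zero_left [simp]: "vscale (0::'a::comm_ring) v = 0"
  by (simp add: vscale_def fun_eq_iff)

lemma vscale_zero_right [simp]: "vscale (c::'a::comm_ring) 0 = 0"
  by (simp add: vscale_def fun_eq_iff)

lemma vscale_one [simp]: "vscale (1::'a::comm_ring_1) v = v"
  by (simp add: vscale_def fun_eq_iff)

lemma vscale_minus_left: "vscale (- c::'a::comm_ring) v = - vscale c v"
  by (simp add: vscale_def fun_eq_iff)

lemma subspW_iff:
  "subspW L \<longleftrightarrow> 0 \<in> L \<and> (\<forall>u\<in>L. \<forall>v\<in>L. u + v \<in> L) \<and> (\<forall>c. \<forall>v\<in>L. vscale c v \<in> L)"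
  by (simp add: subspW_def vscale_def)

definition dot :: "('n::finite \<Rightarrow> 'a::comm_ring) \<Rightarrow> ('n \<Rightarrow> 'a) \<Rightarrow> 'a" where
  "dot c w = (\<Sum>i\<in>UNIV. c i * w i)"

lemma dot_commute: "dot c w = dot w c"
  by (simp add: dot_def mult.commute)

lemma dot_zero_left [simp]: "dot 0 w = 0"
  by (simp add: dot_def)

lemma dot_zero_right [simp]: "dot c 0 = 0"
  by (simp add: dot_def)

lemma dot_add_right: "dot c (u + v) = dot c u + dot c v"
  by (simp add: dot_def distrib_left sum.distrib)

lemma dot_diff_right: "dot c (u - v) = dot c u - dot c v"
  by (simp add: dot_def right_diff_distrib sum_subtractf)

lemma dot_vscale_right: "dot c (vscale k v) = k * dot c v"
  by (simp add: dot_def vscale_def sum_distrib_left algebra_simps)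

lemma dot_unit_vector: "dot c (\<lambda>j. if j = i then 1 else 0) = c i"
  for c :: "'n::finite \<Rightarrow> 'a::comm_ring_1"
  by (simp add: dot_def if_distrib cong: if_cong)

lemma hyperplaneW_kernel:
  fixes \<phi> :: "('n::finite, 'p::prime_card) vecW \<Rightarrow> 'p mod_ring"
  assumes add: "\<And>u v. \<phi> (u + v) = \<phi> u + \<phi> v" and scale: "\<And>c v. \<phi> (vscale c v) = c * \<phi> v"
    and nonzero: "\<phi> w \<noteq> 0"
  shows "hyperplaneW {x. \<phi> x = 0}"
  unfolding hyperplaneW_def
proof (intro conjI allI impI)
  let ?L = "{x. \<phi> x = 0}"
  show "subspW ?L"
    using scale[of 0 0] unfolding subspW_iff by (simp add: add scale)
  show "?L \<noteq> UNIV" using nonzero by blast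
  fix M assume M: "subspW M \<and> ?L \<subseteq> M"
  show "M = ?L \<or> M = UNIV"
  proof (cases "M = ?L")
    case False
    then obtain m where m: "m \<in> M" "\<phi> m \<noteq> 0" using M by blast
    have "x \<in> M" for x
    proof -
      define \<alpha> where "\<alpha> = \<phi> x / \<phi> m"
      have "x + vscale (- \<alpha>) m \<in> M"
        using M m(2) by (auto simp: add scale \<alpha>_def)
      moreover have "vscale \<alpha> m \<in> M" using M m(1) unfolding subspW_iff by blast
      ultimately have "(x + vscale (- \<alpha>) m) + vscale \<alpha> m \<in> M"
        using M unfolding subspW_iff by blast
      then show ?thesis by (simp add: vscale_minus_left)
    qed
    then show ?thesis by blast
  qed simp
qed

lemma hyperplaneW_dot_kernel:
  fixes c :: "('n::finite, 'p::prime_card) vecW"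
  assumes "c \<noteq> 0"
  shows "hyperplaneW {w. dot c w = 0}"
proof -
  obtain i where "c i \<noteq> 0" using assms by (auto simp: fun_eq_iff)
  then show ?thesis
    by (intro hyperplaneW_kernel[where w="\<lambda>j. if j = i then 1 else 0"])
      (simp_all add: dot_add_right dot_vscale_right dot_unit_vector)
qed

lemma card_dot_level_set:
  fixes d :: "('n::finite, 'p::prime_card) vecW"
  assumes "d \<noteq> 0"
  shows "card {c. dot c d = s} = card {c. dot c d = 0}"
proof -
  obtain i where di: "d i \<noteq> 0" using assms by (auto simp: fun_eq_iff)
  define e where "e = vscale (s / d i) (\<lambda>j. if j = i then 1 else 0)"
  have de: "dot d e = s"
    using di by (simp add: e_def dot_vscale_right dot_unit_vector)
  have "bij_betw (\<lambda>c. c + e) {c. dot c d = 0} {c. dot c d = s}"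
    by (rule bij_betwI[where g="\<lambda>c. c - e"])
      (auto simp: dot_commute[of _ d] dot_add_right dot_diff_right de)
  then show ?thesis by (simp add: bij_betw_same_card)
qed

lemma card_dot_kernel:
  fixes d :: "('n::finite, 'p::prime_card) vecW"
  assumes "d \<noteq> 0"
  shows "real (card {c. dot c d = 0}) = real CARD(('n, 'p) vecW) / real CARD('p)"
proof -
  have "CARD(('n, 'p) vecW) = (\<Sum>s\<in>(UNIV::'p mod_ring set). card {c. dot c d = s})"
    using sum.group[of UNIV UNIV "\<lambda>c. dot c d" "\<lambda>_. 1::nat"] by simp
  also have "\<dots> = (\<Sum>s\<in>(UNIV::'p mod_ring set). card {c. dot c d = 0})"
    by (rule sum.cong[OF refl card_dot_level_set[OF assms]])
  finally show ?thesis by simp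
qed

section \<open>The abelian estimate: random walks on \<open>W\<close> along lines\<close>

definition empirical_mass :: "nat \<Rightarrow> (nat \<Rightarrow> 'v) \<Rightarrow> 'v set \<Rightarrow> real" where
  "empirical_mass N v L = real (card {j\<in>{..<N}. v j \<in> L}) / real N"

lemma card_le_of_empirical_mass_le:
  "N \<ge> 1 \<Longrightarrow> empirical_mass N v L \<le> \<beta> \<Longrightarrow> real (card {j\<in>{..<N}. v j \<in> L}) \<le> \<beta> * real N"
  by (simp add: empirical_mass_def divide_le_eq)

text \<open>The sums of \<open>u\<close> over the affine hyperplanes \<open>dot c y = s\<close> replace Fourier coefficients:
  their squares are nonnegative, and they determine \<open>u\<close> when \<open>u\<close> has mean zero.\<close>

definition hyperplane_sum ::
    "('n::finite, 'p::prime_card) vecW \<Rightarrow> (('n, 'p) vecW \<Rightarrow> real) \<Rightarrow> 'p mod_ring \<Rightarrow> real" where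
  "hyperplane_sum c u s = sum u {y. dot c y = s}"

lemma sum_hyperplane_sum: "(\<Sum>s\<in>UNIV. hyperplane_sum c u s) = (\<Sum>y\<in>UNIV. u y)"
  unfolding hyperplane_sum_def using sum.group[of UNIV UNIV "dot c" u] by simp

lemma hyperplane_sum_zero: "hyperplane_sum 0 u s = (if s = 0 then (\<Sum>y\<in>UNIV. u y) else 0)"
  by (simp add: hyperplane_sum_def)

lemma hyperplane_sum_square_sum:
  "(\<Sum>w\<in>UNIV. u w * hyperplane_sum c u (dot c w)) = (\<Sum>s\<in>UNIV. (hyperplane_sum c u s)\<^sup>2)"
proof -
  have "(\<Sum>w\<in>UNIV. u w * hyperplane_sum c u (dot c w))
      = (\<Sum>s\<in>UNIV. \<Sum>w\<in>{w\<in>UNIV. dot c w = s}. u w * hyperplane_sum c u (dot c w))"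
    by (rule sum.group[symmetric]) auto
  also have "\<dots> = (\<Sum>s\<in>UNIV. \<Sum>w | dot c w = s. u w * hyperplane_sum c u s)"
    by (intro sum.cong) auto
  also have "\<dots> = (\<Sum>s\<in>UNIV. (hyperplane_sum c u s)\<^sup>2)"
    by (simp add: hyperplane_sum_def sum_distrib_right power2_eq_square)
  finally show ?thesis .
qed

lemma hyperplane_sum_inversion:
  fixes u :: "('n::finite, 'p::prime_card) vecW \<Rightarrow> real"
  assumes u0: "(\<Sum>y\<in>UNIV. u y) = 0"
  shows "(\<Sum>c\<in>UNIV. hyperplane_sum c u (dot c w))
    = (real CARD(('n, 'p) vecW) - real CARD(('n, 'p) vecW) / real CARD('p)) * u w"
proof -
  define K where "K = real CARD(('n, 'p) vecW) / real CARD('p)"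
  have count: "real (card {c. dot c y = dot c w})
      = K + (if y = w then real CARD(('n, 'p) vecW) - K else 0)" for y
  proof (cases "y = w")
    case False
    then have "{c. dot c y = dot c w} = {c. dot c (y - w) = 0}"
      by (simp add: dot_diff_right)
    then show ?thesis using card_dot_kernel[of "y - w"] False by (simp add: K_def)
  qed simp
  have "(\<Sum>c\<in>UNIV. hyperplane_sum c u (dot c w))
      = (\<Sum>c\<in>UNIV. \<Sum>y\<in>UNIV. if dot c y = dot c w then u y else 0)"
    unfolding hyperplane_sum_def by (simp add: sum.inter_filter[symmetric])
  also have "\<dots> = (\<Sum>y\<in>UNIV. \<Sum>c\<in>UNIV. if dot c y = dot c w then u y else 0)"
    by (rule sum.swap)
  also have "\<dots> = (\<Sum>y\<in>UNIV. u y * real (card {c. dot c y = dot c w}))"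
    by (simp add: sum.If_cases mult.commute)
  also have "\<dots> = (\<Sum>y\<in>UNIV. K * u y + (if y = w then (real CARD(('n, 'p) vecW) - K) * u y else 0))"
    unfolding count by (rule sum.cong) (auto simp: algebra_simps)
  also have "\<dots> = K * (\<Sum>y\<in>UNIV. u y) + (real CARD(('n, 'p) vecW) - K) * u w"
    by (simp add: sum.distrib sum_distrib_left)
  finally show ?thesis using u0 by (simp add: K_def)
qed

lemma hyperplane_sum_Plancherel:
  fixes u :: "('n::finite, 'p::prime_card) vecW \<Rightarrow> real"
  assumes u0: "(\<Sum>y\<in>UNIV. u y) = 0"
  shows "(\<Sum>c\<in>UNIV. \<Sum>s\<in>UNIV. (hyperplane_sum c u s)\<^sup>2)
    = (real CARD(('n, 'p) vecW) - real CARD(('n, 'p) vecW) / real CARD('p)) * l2_inner u u"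
proof -
  have "(\<Sum>c\<in>UNIV. \<Sum>s\<in>UNIV. (hyperplane_sum c u s)\<^sup>2)
      = (\<Sum>w\<in>UNIV. u w * (\<Sum>c\<in>UNIV. hyperplane_sum c u (dot c w)))"
    unfolding hyperplane_sum_square_sum[symmetric] sum_distrib_left by (rule sum.swap)
  then show ?thesis
    by (simp add: hyperplane_sum_inversion[OF u0] l2_inner_def sum_distrib_right mult_ac)
qed

lemma sum_hyperplane_sum_along_line:
  fixes c :: "('n::finite, 'p::prime_card) vecW"
  assumes "(\<Sum>y\<in>UNIV. u y) = 0"
  shows "(\<Sum>t\<in>UNIV. hyperplane_sum c u (dot c (w + vscale t v)))
    = (if dot c v = 0 then real CARD('p) * hyperplane_sum c u (dot c w) else 0)"
proof (cases "dot c v = 0")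
  case False
  have "(\<Sum>t\<in>UNIV. hyperplane_sum c u (dot c (w + vscale t v)))
      = (\<Sum>t\<in>UNIV. hyperplane_sum c u (dot c v * t + dot c w))"
    by (simp add: dot_add_right dot_vscale_right mult.commute add.commute)
  also have "\<dots> = (\<Sum>t\<in>UNIV. hyperplane_sum c u t)"
    using sum_UNIV_mult_const[OF False, of "\<lambda>t. hyperplane_sum c u (t + dot c w)"]
    by (simp add: sum_UNIV_add_const)
  finally show ?thesis using False assms by (simp add: sum_hyperplane_sum)
qed (simp add: dot_add_right dot_vscale_right)

lemma line_correlation_eq:
  fixes u :: "('n::finite, 'p::prime_card) vecW \<Rightarrow> real"
  assumes u0: "(\<Sum>y\<in>UNIV. u y) = 0"
  shows "(real CARD(('n, 'p) vecW) - real CARD(('n, 'p) vecW) / real CARD('p))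
      * (\<Sum>w\<in>UNIV. u w * (\<Sum>t\<in>UNIV. u (w + vscale t v)))
    = real CARD('p) * (\<Sum>c | dot c v = 0. \<Sum>s\<in>UNIV. (hyperplane_sum c u s)\<^sup>2)"
    (is "?M * _ = _")
proof -
  have "?M * (\<Sum>w\<in>UNIV. u w * (\<Sum>t\<in>UNIV. u (w + vscale t v)))
      = (\<Sum>w\<in>UNIV. u w * (\<Sum>t\<in>UNIV. ?M * u (w + vscale t v)))"
    by (simp add: sum_distrib_left algebra_simps)
  also have "\<dots> = (\<Sum>w\<in>UNIV. u w * (\<Sum>t\<in>UNIV. \<Sum>c\<in>UNIV. hyperplane_sum c u (dot c (w + vscale t v))))"
    by (simp only: hyperplane_sum_inversion[OF u0])
  also have "\<dots> = (\<Sum>w\<in>UNIV. u w * (\<Sum>c\<in>UNIV. \<Sum>t\<in>UNIV. hyperplane_sum c u (dot c (w + vscale t v))))"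
    by (simp only: sum.swap[of _ "UNIV::'p mod_ring set"])
  also have "\<dots> = (\<Sum>w\<in>UNIV. u w
      * (\<Sum>c\<in>UNIV. if dot c v = 0 then real CARD('p) * hyperplane_sum c u (dot c w) else 0))"
    by (simp only: sum_hyperplane_sum_along_line[OF u0])
  also have "\<dots> = (\<Sum>c\<in>UNIV. \<Sum>w\<in>UNIV. u w
      * (if dot c v = 0 then real CARD('p) * hyperplane_sum c u (dot c w) else 0))"
    unfolding sum_distrib_left by (rule sum.swap)
  also have "\<dots> = (\<Sum>c\<in>UNIV. if dot c v = 0
      then real CARD('p) * (\<Sum>w\<in>UNIV. u w * hyperplane_sum c u (dot c w)) else 0)"
    by (rule sum.cong) (simp_all add: sum_distrib_left mult_ac)
  also have "\<dots> = real CARD('p) * (\<Sum>c | dot c v = 0. \<Sum>w\<in>UNIV. u w * hyperplane_sum c u (dot c w))"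
    by (simp add: sum.If_cases sum_distrib_left)
  finally show ?thesis by (simp only: hyperplane_sum_square_sum)
qed

lemma sum_line_correlation_le:
  fixes u :: "('n::finite, 'p::prime_card) vecW \<Rightarrow> real" and v :: "nat \<Rightarrow> ('n, 'p) vecW"
  assumes u0: "(\<Sum>y\<in>UNIV. u y) = 0" and N: "N \<ge> 1"
    and mass: "\<And>L. hyperplaneW L \<Longrightarrow> empirical_mass N v L \<le> \<beta>"
  shows "(\<Sum>j<N. \<Sum>w\<in>UNIV. u w * (\<Sum>t\<in>UNIV. u (w + vscale t (v j))))
    \<le> real CARD('p) * real N * \<beta> * l2_inner u u"
proof -
  define M where "M = real CARD(('n, 'p) vecW) - real CARD(('n, 'p) vecW) / real CARD('p)"
  define Q where "Q c = (\<Sum>s\<in>UNIV. (hyperplane_sum c u s)\<^sup>2)" for c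
  define count where "count c = real (card {j\<in>{..<N}. dot c (v j) = 0})" for c
  have "real CARD(('n, 'p) vecW) / real CARD('p) < real CARD(('n, 'p) vecW)"
    using prime_card[where 'a='p] prime_gt_1_nat by (simp add: divide_less_eq)
  then have M_pos: "M > 0" by (simp add: M_def)
  have Q_nonneg: "Q c \<ge> 0" for c
    unfolding Q_def by (rule sum_nonneg) simp
  have Q_zero: "Q 0 = 0"
    by (simp add: Q_def hyperplane_sum_zero u0 cong: if_cong)
  have count_le: "count c \<le> \<beta> * real N" if "c \<noteq> 0" for c
    using card_le_of_empirical_mass_le[OF N mass[OF hyperplaneW_dot_kernel[OF that]]]
    by (simp add: count_def)
  have sum_Q: "(\<Sum>c\<in>UNIV. Q c) = M * l2_inner u u"
    unfolding Q_def M_def by (rule hyperplane_sum_Plancherel[OF u0])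
  have "M * (\<Sum>j<N. \<Sum>w\<in>UNIV. u w * (\<Sum>t\<in>UNIV. u (w + vscale t (v j))))
      = (\<Sum>j<N. M * (\<Sum>w\<in>UNIV. u w * (\<Sum>t\<in>UNIV. u (w + vscale t (v j)))))"
    by (rule sum_distrib_left)
  also have "\<dots> = (\<Sum>j<N. real CARD('p) * (\<Sum>c | dot c (v j) = 0. Q c))"
    unfolding M_def Q_def by (simp only: line_correlation_eq[OF u0])
  also have "\<dots> = real CARD('p) * (\<Sum>j<N. \<Sum>c\<in>UNIV. if dot c (v j) = 0 then Q c else 0)"
    by (simp add: sum_distrib_left sum.If_cases)
  also have "\<dots> = real CARD('p) * (\<Sum>c\<in>UNIV. Q c * count c)"
    by (subst sum.swap) (simp add: sum.If_cases count_def Int_def conj_commute mult.commute)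
  also have "\<dots> \<le> real CARD('p) * (\<Sum>c\<in>UNIV. Q c * (\<beta> * real N))"
  proof (rule mult_left_mono[OF sum_mono])
    show "Q c * count c \<le> Q c * (\<beta> * real N)" for c
      using Q_zero Q_nonneg[of c] count_le[of c] by (cases "c = 0") (auto intro: mult_left_mono)
  qed simp
  also have "\<dots> = M * (real CARD('p) * real N * \<beta> * l2_inner u u)"
    by (simp add: sum_distrib_right[symmetric] sum_Q)
  finally show ?thesis using M_pos by simp
qed

lemma line_energy_eq:
  fixes u :: "('n::finite, 'p::prime_card) vecW \<Rightarrow> real"
  shows "(\<Sum>w\<in>UNIV. \<Sum>t\<in>UNIV. (u w - u (w + vscale t v))\<^sup>2)
    = 2 * real CARD('p) * l2_inner u u - 2 * (\<Sum>w\<in>UNIV. u w * (\<Sum>t\<in>UNIV. u (w + vscale t v)))"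
proof -
  have "(\<Sum>w\<in>UNIV. \<Sum>t\<in>UNIV. (u (w + vscale t v))\<^sup>2) = (\<Sum>t\<in>(UNIV::'p mod_ring set). \<Sum>w\<in>UNIV. (u w)\<^sup>2)"
    by (subst sum.swap) (rule sum.cong[OF refl], rule sum_UNIV_add_const[where F="\<lambda>w. (u w)\<^sup>2"])
  then show ?thesis
    by (simp add: power2_diff sum.distrib sum_subtractf sum_distrib_left l2_inner_def
        power2_eq_square algebra_simps)
qed

lemma line_energy_bound:
  fixes u :: "('n::finite, 'p::prime_card) vecW \<Rightarrow> real" and v :: "nat \<Rightarrow> ('n, 'p) vecW"
  assumes "(\<Sum>y\<in>UNIV. u y) = 0" and "N \<ge> 1"
    and "\<And>L. hyperplaneW L \<Longrightarrow> empirical_mass N v L \<le> \<beta>"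
  shows "2 * real CARD('p) * real N * (1 - \<beta>) * l2_inner u u
    \<le> (\<Sum>j<N. \<Sum>w\<in>UNIV. \<Sum>t\<in>UNIV. (u w - u (w + vscale t (v j)))\<^sup>2)"
  using sum_line_correlation_le[OF assms]
  by (simp add: line_energy_eq sum_subtractf sum_distrib_left[symmetric] algebra_simps)

definition hpow_mod :: "('n::finite, 'p::prime_card) heis \<Rightarrow> 'p mod_ring \<Rightarrow> ('n, 'p) heis" where
  "hpow_mod a t = (vscale t (fst a), t * snd a)"

lemma hpow_mod_zero [simp]: "hpow_mod a 0 = 0"
  by (simp add: hpow_mod_def zero_prod_def)

lemma uminus_hpow_mod: "- hpow_mod a t = hpow_mod a (- t)"
  by (simp add: hpow_mod_def vscale_minus_left)

lemma inj_hpow_mod: "a \<noteq> 0 \<Longrightarrow> inj (hpow_mod a)"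
proof (rule injI)
  fix s t assume a: "a \<noteq> 0" and st: "hpow_mod a s = hpow_mod a t"
  show "s = t"
  proof (cases "fst a = 0")
    case True
    then have "snd a \<noteq> 0" using a by (simp add: prod_eq_iff)
    then show ?thesis using st by (simp add: hpow_mod_def)
  next
    case False
    then obtain i where "fst a i \<noteq> 0" by (auto simp: fun_eq_iff)
    then show ?thesis using st by (auto simp: hpow_mod_def vscale_def fun_eq_iff)
  qed
qed

lemma two_neq_zero_mod_ring: "odd CARD('p::prime_card) \<Longrightarrow> (2::'p mod_ring) \<noteq> 0"
proof
  assume odd: "odd CARD('p)" and "(2::'p mod_ring) = 0"
  then have "(of_nat 2 :: 'p mod_ring) = 0" by simp
  then have "CARD('p) dvd 2" using of_nat_0_mod_ring_dvd by blast
  then have "CARD('p) \<le> 2" by (rule dvd_imp_le) simp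
  moreover have "CARD('p) \<ge> 2" using prime_card[where 'a='p] prime_ge_2_nat by blast
  ultimately show False using odd by simp
qed

lemma card_heis_ge_two: "CARD(('n::finite, 'p::prime_card) heis) \<ge> 2"
proof -
  have "CARD('p) \<ge> 2" using prime_card[where 'a='p] prime_ge_2_nat by blast
  moreover have "CARD('p) \<le> CARD(('n, 'p) vecW) * CARD('p)"
    using mult_le_mono1[of 1 "CARD(('n, 'p) vecW)" "CARD('p)"] by (simp add: Suc_leI)
  ultimately show ?thesis unfolding card_prod CARD_mod_ring by linarith
qed

locale heisenberg =
  fixes \<omega> :: "('n::finite, 'p::prime_card) vecW \<Rightarrow> ('n, 'p) vecW \<Rightarrow> 'p mod_ring"
  assumes alt_form: "alt_form \<omega>"
    and p_odd: "odd CARD('p)"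
begin

abbreviation mul :: "('n, 'p) heis \<Rightarrow> ('n, 'p) heis \<Rightarrow> ('n, 'p) heis" (infixl "\<cdot>" 70)
  where "x \<cdot> y \<equiv> hmul \<omega> x y"

lemma omega_add_left: "\<omega> (u + v) w = \<omega> u w + \<omega> v w"
  using alt_form by (simp add: alt_form_def)

lemma omega_add_right: "\<omega> u (v + w) = \<omega> u v + \<omega> u w"
  using alt_form by (simp add: alt_form_def)

lemma omega_vscale_left: "\<omega> (vscale c v) w = c * \<omega> v w"
  using alt_form by (simp add: alt_form_def vscale_def)

lemma omega_vscale_right: "\<omega> v (vscale c w) = c * \<omega> v w"
  using alt_form by (simp add: alt_form_def vscale_def)

lemma omega_self [simp]: "\<omega> v v = 0"
  using alt_form by (simp add: alt_form_def)

lemma omega_nondegenerate: "(\<And>w. \<omega> v w = 0) \<Longrightarrow> v = 0"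
  using alt_form by (simp add: alt_form_def)

lemma omega_zero_left [simp]: "\<omega> 0 w = 0"
  using omega_vscale_left[of 0 0 w] by simp

lemma omega_zero_right [simp]: "\<omega> w 0 = 0"
  using omega_vscale_right[of w 0 0] by simp

lemma omega_minus_left: "\<omega> (- u) w = - \<omega> u w"
  using omega_vscale_left[of "-1" u w] by (simp add: vscale_minus_left)

lemma omega_minus_right: "\<omega> w (- u) = - \<omega> w u"
  using omega_vscale_right[of w "-1" u] by (simp add: vscale_minus_left)

lemma omega_antisym: "\<omega> w v = - \<omega> v w"
proof -
  have "\<omega> v w + \<omega> w v = \<omega> (v + w) (v + w)"
    by (simp only: omega_add_left omega_add_right) simp
  then show ?thesis by (simp add: add_eq_0_iff)
qed

lemma mul_assoc: "x \<cdot> y \<cdot> z = x \<cdot> (y \<cdot> z)"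
  by (simp add: hmul_def omega_add_left omega_add_right algebra_simps)

lemma mul_zero_left [simp]: "0 \<cdot> x = x"
  by (simp add: hmul_def)

lemma mul_zero_right [simp]: "x \<cdot> 0 = x"
  by (simp add: hmul_def)

lemma mul_right_inverse [simp]: "x \<cdot> - x = 0"
  by (simp add: hmul_def omega_minus_right zero_prod_def)

lemma mul_left_inverse [simp]: "- x \<cdot> x = 0"
  by (simp add: hmul_def omega_minus_left zero_prod_def)

lemma minus_mul: "- (x \<cdot> y) = - y \<cdot> - x"
  by (simp add: hmul_def omega_minus_left omega_minus_right algebra_simps omega_antisym[of "fst y"])

lemma mul_minus_cancel_right [simp]: "x \<cdot> g \<cdot> - g = x" "x \<cdot> - g \<cdot> g = x"
  by (simp_all add: mul_assoc)

lemma mul_minus_cancel_left [simp]: "- x \<cdot> (x \<cdot> g) = g" "x \<cdot> (- x \<cdot> g) = g"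
  by (simp_all add: mul_assoc[symmetric])

lemma bij_mul_right: "bij (\<lambda>x. x \<cdot> g)"
  by (rule bij_betwI[where g="\<lambda>x. x \<cdot> - g"]) auto

lemma bij_mul_left: "bij (\<lambda>g. x \<cdot> g)"
  by (rule bij_betwI[where g="\<lambda>g. - x \<cdot> g"]) auto

lemma sum_mul_right: "(\<Sum>x\<in>UNIV. F (x \<cdot> g)) = (\<Sum>x\<in>UNIV. F x)"
  using sum.reindex_bij_betw[OF bij_mul_right, of F] by simp

lemma sum_mul_left: "(\<Sum>g\<in>UNIV. F (x \<cdot> g)) = (\<Sum>g\<in>UNIV. F g)"
  using sum.reindex_bij_betw[OF bij_mul_left, of F] by simp

lemma mul_central_right: "x \<cdot> (0, s) = (fst x, snd x + s)"
  by (simp add: hmul_def)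

lemma central_commute: "x \<cdot> (0, s) = (0, s) \<cdot> x"
  by (simp add: hmul_def add.commute)

text \<open>This is where \<open>p\<close> odd is used: \<open>inverse 2 + inverse 2 = 1\<close>.\<close>

lemma mul_commute_central: "x \<cdot> y = y \<cdot> x \<cdot> (0, \<omega> (fst x) (fst y))"
proof -
  define c where "c = \<omega> (fst x) (fst y)"
  define i where "i = inverse (2::'p mod_ring)"
  have "i + i = 1"
    using right_inverse[OF two_neq_zero_mod_ring[OF p_odd]] mult_2 unfolding i_def by metis
  then have half: "i * c + i * c = c"
    by (metis distrib_right mult_1)
  have "snd y + snd x + i * (- c) + c = snd y + snd x + i * (- c) + (i * c + i * c)"
    by (simp only: half)
  also have "\<dots> = snd x + snd y + i * c"
    by (simp add: algebra_simps)
  finally have snd_eq: "snd y + snd x + i * (- c) + c = snd x + snd y + i * c" .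
  have "y \<cdot> x \<cdot> (0, c) = (fst y + fst x, snd y + snd x + i * (- c) + c)"
    by (simp add: hmul_def i_def c_def omega_antisym[of "fst y"])
  also have "\<dots> = x \<cdot> y"
    by (simp only: snd_eq add.commute[of "fst y"]) (simp add: hmul_def i_def c_def)
  finally show ?thesis by (simp add: c_def)
qed

lemma hpow_mod_add: "hpow_mod a s \<cdot> hpow_mod a t = hpow_mod a (s + t)"
  by (simp add: hpow_mod_def hmul_def omega_vscale_left omega_vscale_right vscale_add_left algebra_simps)

lemma mul_hpow_mod_add: "x \<cdot> hpow_mod a s \<cdot> hpow_mod a t = x \<cdot> hpow_mod a (s + t)"
  by (simp add: mul_assoc hpow_mod_add)

lemma hpow_eq_hpow_mod: "hpow \<omega> a k = hpow_mod a (of_nat k)"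
proof (induction k)
  case (Suc k)
  have "hpow \<omega> a (Suc k) = hpow_mod a 1 \<cdot> hpow_mod a (of_nat k)"
    using Suc by (simp add: hpow_mod_def)
  then show ?case by (simp add: hpow_mod_add add.commute)
qed (simp add: zero_prod_def)

lemma cyc_eq_range_hpow_mod: "cyc \<omega> a = range (hpow_mod a)"
proof -
  have "surj (of_nat :: nat \<Rightarrow> 'p mod_ring)"
    unfolding surj_def using surj_of_nat_mod_ring by metis
  moreover have "cyc \<omega> a = hpow_mod a ` range of_nat"
    by (simp add: cyc_def hpow_eq_hpow_mod[abs_def] image_image)
  ultimately show ?thesis by simp
qed

section \<open>Energies along cyclic cosets\<close>

definition coset_sum :: "('n, 'p) heis \<Rightarrow> (('n, 'p) heis \<Rightarrow> real) \<Rightarrow> ('n, 'p) heis \<Rightarrow> real" where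
  "coset_sum a f x = (\<Sum>t\<in>UNIV. f (x \<cdot> hpow_mod a t))"

definition coset_energy :: "('n, 'p) heis \<Rightarrow> (('n, 'p) heis \<Rightarrow> real) \<Rightarrow> real" where
  "coset_energy a f = (\<Sum>x\<in>UNIV. \<Sum>t\<in>UNIV. (f x - f (x \<cdot> hpow_mod a t))\<^sup>2)"

definition autocorr :: "('n, 'p) heis \<Rightarrow> (('n, 'p) heis \<Rightarrow> real) \<Rightarrow> 'p mod_ring \<Rightarrow> real" where
  "autocorr a f d = (\<Sum>x\<in>UNIV. f x * f (x \<cdot> hpow_mod a d))"

lemma coset_energy_nonneg: "coset_energy a f \<ge> 0"
  unfolding coset_energy_def by (intro sum_nonneg) simp

lemma coset_sum_mul_hpow_mod: "coset_sum a f (x \<cdot> hpow_mod a s) = coset_sum a f x"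
  unfolding coset_sum_def mul_hpow_mod_add
  by (subst add.commute) (rule sum_UNIV_add_const[where F="\<lambda>t. f (x \<cdot> hpow_mod a t)"])

lemma l2_inner_coset_sum: "l2_inner f (coset_sum a f) = (\<Sum>d\<in>UNIV. autocorr a f d)"
  unfolding l2_inner_def coset_sum_def autocorr_def sum_distrib_left by (rule sum.swap)

lemma autocorr_zero: "autocorr a f 0 = l2_inner f f"
  by (simp add: autocorr_def l2_inner_def)

lemma coset_energy_eq:
  "coset_energy a f = 2 * (real CARD('p) * l2_inner f f - l2_inner f (coset_sum a f))"
proof -
  have "(\<Sum>x\<in>UNIV. \<Sum>t\<in>UNIV. (f (x \<cdot> hpow_mod a t))\<^sup>2) = (\<Sum>t\<in>(UNIV::'p mod_ring set). \<Sum>x\<in>UNIV. (f x)\<^sup>2)"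
    by (subst sum.swap) (rule sum.cong[OF refl], rule sum_mul_right[where F="\<lambda>y. (f y)\<^sup>2"])
  then show ?thesis
    by (simp add: coset_energy_def coset_sum_def l2_inner_def power2_diff sum.distrib sum_subtractf
        sum_distrib_left power2_eq_square algebra_simps)
qed

lemma l2_inner_coset_sum_self:
  "l2_inner (coset_sum a f) (coset_sum a f) = real CARD('p) * l2_inner f (coset_sum a f)"
proof -
  have shift: "(\<Sum>x\<in>UNIV. f (x \<cdot> hpow_mod a t) * f (x \<cdot> hpow_mod a t')) = autocorr a f (t' - t)"
    for t t'
    unfolding autocorr_def
    using sum_mul_right[of "\<lambda>x. f (x \<cdot> hpow_mod a t) * f (x \<cdot> hpow_mod a t')" "hpow_mod a (- t)"]
    by (simp add: mul_hpow_mod_add)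
  have "l2_inner (coset_sum a f) (coset_sum a f)
      = (\<Sum>t\<in>UNIV. \<Sum>t'\<in>UNIV. \<Sum>x\<in>UNIV. f (x \<cdot> hpow_mod a t) * f (x \<cdot> hpow_mod a t'))"
    unfolding l2_inner_def coset_sum_def sum_product
    by (rule trans[OF sum.swap], rule sum.cong[OF refl], rule sum.swap)
  also have "\<dots> = (\<Sum>t\<in>(UNIV::'p mod_ring set). \<Sum>d\<in>UNIV. autocorr a f d)"
    unfolding shift diff_conv_add_uminus
    by (rule sum.cong[OF refl], rule sum_UNIV_add_const[where F="autocorr a f"])
  finally show ?thesis by (simp add: l2_inner_coset_sum)
qed

lemma l2_inner_coset_sum_left:
  assumes "\<And>x t. h (x \<cdot> hpow_mod b t) = h x"
  shows "l2_inner (coset_sum b g) h = real CARD('p) * l2_inner g h"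
proof -
  have "l2_inner g h = (\<Sum>x\<in>UNIV. g (x \<cdot> hpow_mod b t) * h x)" for t
    unfolding l2_inner_def
    using sum_mul_right[of "\<lambda>x. g x * h x" "hpow_mod b t"] by (simp add: assms)
  then have "real CARD('p) * l2_inner g h = (\<Sum>t\<in>UNIV. \<Sum>x\<in>UNIV. g (x \<cdot> hpow_mod b t) * h x)"
    by simp
  also have "\<dots> = l2_inner (coset_sum b g) h"
    unfolding l2_inner_def coset_sum_def sum_distrib_right by (rule sum.swap)
  finally show ?thesis ..
qed

lemma fibre_sum_zero_mul_right: "fibre_sum_zero f \<Longrightarrow> fibre_sum_zero (\<lambda>x. f (x \<cdot> g))"
  unfolding fibre_sum_zero_def hmul_def
  using sum_UNIV_add_const[where F="\<lambda>s. f (_, s)"] by (simp add: add.assoc)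

lemma fibre_const_mul_right: "fibre_const f \<Longrightarrow> fibre_const (\<lambda>x. f (x \<cdot> g))"
  unfolding fibre_const_def hmul_def by simp

lemma fibre_sum_zero_coset_sum: "fibre_sum_zero f \<Longrightarrow> fibre_sum_zero (coset_sum a f)"
  using fibre_sum_zero_mul_right[of f]
  unfolding fibre_sum_zero_def coset_sum_def by (subst sum.swap) simp

text \<open>Translating by a central element along a fibre and averaging kills a function with
  zero fibre sums; since \<open>\<omega> (fst a) (fst b) \<noteq> 0\<close>, commuting \<open>b\<^sup>d\<close> past the powers of \<open>a\<close>
  produces all central elements.\<close>

lemma autocorr_transversal_eq_zero:
  assumes inv: "\<And>x t. g (x \<cdot> hpow_mod a t) = g x" and g: "fibre_sum_zero g"
    and ab: "\<omega> (fst a) (fst b) \<noteq> 0" and d: "d \<noteq> 0"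
  shows "autocorr b g d = 0"
proof -
  define \<zeta> where "\<zeta> = d * \<omega> (fst a) (fst b)"
  have \<zeta>: "\<zeta> \<noteq> 0" using ab d by (simp add: \<zeta>_def)
  have commute: "x \<cdot> hpow_mod a k \<cdot> hpow_mod b d = x \<cdot> hpow_mod b d \<cdot> (0, k * \<zeta>) \<cdot> hpow_mod a k"
    for x k
  proof -
    have "hpow_mod a k \<cdot> hpow_mod b d = hpow_mod b d \<cdot> hpow_mod a k \<cdot> (0, k * \<zeta>)"
      using mul_commute_central[of "hpow_mod a k" "hpow_mod b d"]
      by (simp add: hpow_mod_def omega_vscale_left omega_vscale_right \<zeta>_def mult_ac)
    then show ?thesis by (simp add: mul_assoc central_commute[of "hpow_mod a k"])
  qed
  have "autocorr b g d = (\<Sum>x\<in>UNIV. g x * g (x \<cdot> hpow_mod b d \<cdot> (0, k * \<zeta>)))" for k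
    unfolding autocorr_def
    using sum_mul_right[of "\<lambda>x. g x * g (x \<cdot> hpow_mod b d)" "hpow_mod a k"]
    by (simp add: commute inv)
  then have "real CARD('p) * autocorr b g d
      = (\<Sum>k\<in>UNIV. \<Sum>x\<in>UNIV. g x * g (x \<cdot> hpow_mod b d \<cdot> (0, k * \<zeta>)))"
    by simp
  also have "\<dots> = (\<Sum>x\<in>UNIV. g x * (\<Sum>k\<in>UNIV. g (x \<cdot> hpow_mod b d \<cdot> (0, k * \<zeta>))))"
    unfolding sum_distrib_left by (rule sum.swap)
  also have "\<dots> = 0"
  proof -
    have "(\<Sum>k\<in>UNIV. g (y \<cdot> (0, k * \<zeta>))) = 0" for y
      using g sum_UNIV_mult_const[OF \<zeta>, of "\<lambda>k. g (fst y, snd y + k)"]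
        sum_UNIV_add_const[of "\<lambda>s. g (fst y, s)" "snd y"]
      by (simp add: mul_central_right fibre_sum_zero_def mult.commute add.commute)
    then show ?thesis by simp
  qed
  finally show ?thesis by simp
qed

lemma l2_inner_coset_sum_transversal:
  assumes "\<And>x t. g (x \<cdot> hpow_mod a t) = g x" and "fibre_sum_zero g"
    and "\<omega> (fst a) (fst b) \<noteq> 0"
  shows "l2_inner (coset_sum b g) (coset_sum b g) = real CARD('p) * l2_inner g g"
proof -
  have "(\<Sum>d\<in>UNIV. autocorr b g d) = (\<Sum>d\<in>(UNIV::'p mod_ring set). if d = 0 then l2_inner g g else 0)"
    by (rule sum.cong) (auto simp: autocorr_zero autocorr_transversal_eq_zero[OF assms])
  then show ?thesis by (simp add: l2_inner_coset_sum_self l2_inner_coset_sum)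
qed

lemma coset_energy_pair_bound:
  assumes f: "fibre_sum_zero f" and ab: "\<omega> (fst a) (fst b) \<noteq> 0"
  shows "2 * real CARD('p) * (1 - real CARD('p) powr (-1/2)) * l2_inner f f
    \<le> coset_energy a f + coset_energy b f"
proof -
  define q where "q = real CARD('p)"
  define s where "s = real CARD('p) powr (-1/2)"
  define G where "G = coset_sum a f"
  define H where "H = coset_sum b f"
  have q: "q > 0" by (simp add: q_def)
  have s: "s \<ge> 0" "s\<^sup>2 = 1 / q"
    by (simp_all add: s_def q_def powr_minus_divide powr_half_sqrt power_divide)
  have GG: "l2_inner G G = q * l2_inner f G" and HH: "l2_inner H H = q * l2_inner f H"
    by (simp_all add: G_def H_def q_def l2_inner_coset_sum_self)
  have "(q * l2_inner G H)\<^sup>2 = (l2_inner (coset_sum b G) H)\<^sup>2"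
    by (simp add: l2_inner_coset_sum_left H_def coset_sum_mul_hpow_mod q_def)
  also have "\<dots> \<le> l2_inner (coset_sum b G) (coset_sum b G) * l2_inner H H"
    by (rule l2_inner_Cauchy_Schwarz)
  also have "\<dots> = q * l2_inner G G * l2_inner H H"
    using l2_inner_coset_sum_transversal[OF _ fibre_sum_zero_coset_sum[OF f] ab]
    by (simp add: G_def q_def coset_sum_mul_hpow_mod)
  finally have C: "(l2_inner G H)\<^sup>2 \<le> l2_inner G G * l2_inner H H / q"
    using q by (simp add: power_mult_distrib power2_eq_square field_simps)
  have "(l2_inner f (G + H))\<^sup>2 \<le> l2_inner f f * (l2_inner G G + l2_inner H H + 2 * l2_inner G H)"
    using l2_inner_Cauchy_Schwarz[of f "G + H"] by (simp add: l2_inner_add_self)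
  then have "(q * l2_inner f (G + H))\<^sup>2
      \<le> q\<^sup>2 * l2_inner f f * (l2_inner G G + l2_inner H H + 2 * l2_inner G H)"
    by (simp add: power_mult_distrib mult.assoc mult_left_mono)
  moreover have "q * l2_inner f (G + H) = l2_inner G G + l2_inner H H"
    by (simp add: GG HH l2_inner_add_right algebra_simps)
  ultimately have "l2_inner G G + l2_inner H H \<le> q\<^sup>2 * (1 + s) * l2_inner f f"
    by (intro sum_le_of_almost_orthogonal[OF q s l2_inner_self_nonneg l2_inner_self_nonneg
        l2_inner_self_nonneg C]) simp
  then have "q * (l2_inner f G + l2_inner f H) \<le> q * (q * (1 + s) * l2_inner f f)"
    by (simp add: GG HH power2_eq_square algebra_simps)
  then have "l2_inner f G + l2_inner f H \<le> q * (1 + s) * l2_inner f f"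
    using q by (rule mult_left_le_imp_le)
  then show ?thesis
    by (simp add: coset_energy_eq G_def H_def q_def s_def algebra_simps)
qed

lemma isotropic_subset_hyperplane:
  assumes iso: "\<And>x y. x \<in> A \<Longrightarrow> y \<in> A \<Longrightarrow> \<omega> x y = 0"
  shows "\<exists>L. hyperplaneW L \<and> A \<subseteq> L"
proof (cases "A \<subseteq> {0}")
  case True
  have "hyperplaneW {w. dot (\<lambda>_. 1) w = 0}"
    by (rule hyperplaneW_dot_kernel) (simp add: fun_eq_iff)
  moreover have "A \<subseteq> {w. dot (\<lambda>_. 1) w = 0}" using True by auto
  ultimately show ?thesis by blast
next
  case False
  then obtain a where a: "a \<in> A" "a \<noteq> 0" by blast
  then obtain w where "\<omega> a w \<noteq> 0" using omega_nondegenerate by blast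
  then have "hyperplaneW {x. \<omega> a x = 0}"
    by (intro hyperplaneW_kernel[where w=w]) (simp_all add: omega_add_right omega_vscale_right)
  moreover have "A \<subseteq> {x. \<omega> a x = 0}" using iso a(1) by blast
  ultimately show ?thesis by blast
qed

text \<open>The indices \<open>j\<close> along which \<open>f\<close> has small energy are pairwise \<open>\<omega>\<close>-orthogonal by the
  pair bound, hence lie in a hyperplane and carry mass at most \<open>\<beta>\<close>.\<close>

lemma coset_energy_bound_fibre_sum_zero:
  assumes f: "fibre_sum_zero f" and N: "N \<ge> 1"
    and mass: "\<And>L. hyperplaneW L \<Longrightarrow> empirical_mass N (fst \<circ> a) L \<le> \<beta>"
  shows "real N * (1 - \<beta>) * (real CARD('p) * (1 - real CARD('p) powr (-1/2)) * l2_inner f f)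
    \<le> (\<Sum>j<N. coset_energy (a j) f)"
proof -
  define T where "T = real CARD('p) * (1 - real CARD('p) powr (-1/2)) * l2_inner f f"
  have "real CARD('p) powr (-1/2) \<le> 1"
    by (simp add: powr_minus_divide powr_half_sqrt)
  then have T: "T \<ge> 0"
    unfolding T_def by (intro mult_nonneg_nonneg l2_inner_self_nonneg) auto
  define J where "J = {j\<in>{..<N}. coset_energy (a j) f < T}"
  have "\<omega> (fst (a i)) (fst (a j)) = 0" if "i \<in> J" "j \<in> J" for i j
  proof (rule ccontr)
    assume "\<omega> (fst (a i)) (fst (a j)) \<noteq> 0"
    from coset_energy_pair_bound[OF f this] that show False
      by (simp add: J_def T_def)
  qed
  then obtain L where L: "hyperplaneW L" "fst ` a ` J \<subseteq> L"
    using isotropic_subset_hyperplane[of "fst ` a ` J"] by blast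
  have "card J \<le> card {j\<in>{..<N}. (fst \<circ> a) j \<in> L}"
    using L(2) by (intro card_mono) (auto simp: J_def)
  then have "real (card J) \<le> \<beta> * real N"
    using card_le_of_empirical_mass_le[OF N mass[OF L(1)]] by linarith
  moreover have "J \<subseteq> {..<N}" by (auto simp: J_def)
  then have "card ({..<N} - J) = N - card J" and "card J \<le> N"
    using card_mono[of "{..<N}" J] by (simp_all add: card_Diff_subset finite_subset)
  ultimately have "real N * (1 - \<beta>) * T \<le> real (card ({..<N} - J)) * T"
    using T by (intro mult_right_mono) (auto simp: algebra_simps of_nat_diff)
  also have "\<dots> \<le> (\<Sum>j\<in>{..<N} - J. coset_energy (a j) f)"
    by (rule sum_bounded_below) (auto simp: J_def)
  also have "\<dots> \<le> (\<Sum>j<N. coset_energy (a j) f)"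
    by (rule sum_mono2) (auto simp: coset_energy_nonneg)
  finally show ?thesis by (simp add: T_def)
qed

lemma coset_energy_fibre_const:
  assumes "\<And>x. h x = u (fst x)"
  shows "coset_energy a h
    = real CARD('p) * (\<Sum>w\<in>UNIV. \<Sum>t\<in>UNIV. (u w - u (w + vscale t (fst a)))\<^sup>2)"
proof -
  have "coset_energy a h
      = (\<Sum>x\<in>(UNIV::('n, 'p) heis set). \<Sum>t\<in>UNIV. (u (fst x) - u (fst x + vscale t (fst a)))\<^sup>2)"
    by (simp add: coset_energy_def assms hmul_def hpow_mod_def)
  then show ?thesis
    by (simp add: sum_UNIV_prod[of "\<lambda>x. \<Sum>t\<in>UNIV. (u (fst x) - u (fst x + vscale t (fst a)))\<^sup>2"]
        sum_distrib_left)
qed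

lemma coset_energy_bound_fibre_const:
  assumes h: "fibre_const h" "(\<Sum>x\<in>UNIV. h x) = 0" and N: "N \<ge> 1"
    and mass: "\<And>L. hyperplaneW L \<Longrightarrow> empirical_mass N (fst \<circ> a) L \<le> \<beta>"
  shows "2 * real CARD('p) * real N * (1 - \<beta>) * l2_inner h h \<le> (\<Sum>j<N. coset_energy (a j) h)"
proof -
  define u where "u w = h (w, 0)" for w
  have h_eq: "h x = u (fst x)" for x
    using h(1) unfolding fibre_const_def u_def by (metis prod.collapse)
  have "(\<Sum>x\<in>UNIV. h x) = real CARD('p) * (\<Sum>w\<in>UNIV. u w)"
    by (simp add: h_eq sum_UNIV_prod[of "\<lambda>x. u (fst x)"] sum_distrib_left)
  then have "(\<Sum>w\<in>UNIV. u w) = 0" using h(2) by simp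
  from line_energy_bound[OF this N, of "fst \<circ> a"] mass
  have "2 * real CARD('p) * real N * (1 - \<beta>) * l2_inner u u
      \<le> (\<Sum>j<N. \<Sum>w\<in>UNIV. \<Sum>t\<in>UNIV. (u w - u (w + vscale t (fst (a j))))\<^sup>2)"
    by simp
  moreover have "l2_inner h h = real CARD('p) * l2_inner u u"
    by (simp add: l2_inner_def h_eq sum_UNIV_prod[of "\<lambda>x. u (fst x) * u (fst x)"] sum_distrib_left)
  ultimately show ?thesis
    using coset_energy_fibre_const[of h u, OF h_eq]
    by (simp add: u_def sum_distrib_left[symmetric] mult_left_mono mult_ac)
qed

lemma coset_energy_eq_sum_l2_inner:
  "coset_energy a f = (\<Sum>t\<in>UNIV. l2_inner (f - (\<lambda>x. f (x \<cdot> hpow_mod a t))) (f - (\<lambda>x. f (x \<cdot> hpow_mod a t))))"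
  unfolding coset_energy_def l2_inner_def power2_eq_square by (simp add: sum.swap[of _ "UNIV::'p mod_ring set"])

lemma coset_energy_add_fibre_orthogonal:
  assumes u: "fibre_const u" and w: "fibre_sum_zero w"
  shows "coset_energy a (u + w) = coset_energy a u + coset_energy a w"
proof -
  have "l2_inner ((u + w) - (\<lambda>x. (u + w) (x \<cdot> g))) ((u + w) - (\<lambda>x. (u + w) (x \<cdot> g)))
      = l2_inner (u - (\<lambda>x. u (x \<cdot> g))) (u - (\<lambda>x. u (x \<cdot> g)))
        + l2_inner (w - (\<lambda>x. w (x \<cdot> g))) (w - (\<lambda>x. w (x \<cdot> g)))" for g
  proof -
    have "(u + w) - (\<lambda>x. (u + w) (x \<cdot> g)) = (u - (\<lambda>x. u (x \<cdot> g))) + (w - (\<lambda>x. w (x \<cdot> g)))"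
      by (simp add: fun_eq_iff)
    moreover have "fibre_const (u - (\<lambda>x. u (x \<cdot> g)))" "fibre_sum_zero (w - (\<lambda>x. w (x \<cdot> g)))"
      by (simp_all add: fibre_const_diff fibre_const_mul_right u fibre_sum_zero_diff
          fibre_sum_zero_mul_right w)
    ultimately show ?thesis by (simp only: l2_inner_add_self_fibre_orthogonal)
  qed
  then show ?thesis by (simp only: coset_energy_eq_sum_l2_inner sum.distrib)
qed

lemma coset_energy_demean: "coset_energy a (demean f) = coset_energy a f"
  by (simp add: coset_energy_def demean_def)

lemma coset_energy_bound:
  assumes N: "N \<ge> 1" and mass: "\<And>L. hyperplaneW L \<Longrightarrow> empirical_mass N (fst \<circ> a) L \<le> \<beta>"
  shows "2 * real CARD('p) * real N
      * min (1 - \<beta>) ((1 - \<beta>) * (1 - real CARD('p) powr (-1/2)) / 2)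
      * l2_inner (demean f) (demean f)
    \<le> (\<Sum>j<N. coset_energy (a j) f)"
proof -
  define \<gamma> where "\<gamma> = min (1 - \<beta>) ((1 - \<beta>) * (1 - real CARD('p) powr (-1/2)) / 2)"
  define g0 where "g0 = fibre_mean (demean f)"
  define g1 where "g1 = demean f - g0"
  have g0: "fibre_const g0" "(\<Sum>x\<in>UNIV. g0 x) = 0"
    by (simp_all add: g0_def fibre_const_fibre_mean sum_fibre_mean sum_demean)
  have g1: "fibre_sum_zero g1"
    by (simp add: g1_def g0_def fibre_sum_zero_diff_fibre_mean)
  have split: "demean f = g0 + g1" by (simp add: g1_def)
  have g0_bound: "2 * real CARD('p) * real N * \<gamma> * l2_inner g0 g0 \<le> (\<Sum>j<N. coset_energy (a j) g0)"
  proof -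
    have "\<gamma> * (2 * real CARD('p) * real N * l2_inner g0 g0)
        \<le> (1 - \<beta>) * (2 * real CARD('p) * real N * l2_inner g0 g0)"
      by (rule mult_right_mono) (simp_all add: \<gamma>_def l2_inner_self_nonneg)
    also have "\<dots> \<le> (\<Sum>j<N. coset_energy (a j) g0)"
      using coset_energy_bound_fibre_const[OF g0 N mass] by (simp add: mult_ac)
    finally show ?thesis by (simp add: mult_ac)
  qed
  have g1_bound: "2 * real CARD('p) * real N * \<gamma> * l2_inner g1 g1 \<le> (\<Sum>j<N. coset_energy (a j) g1)"
  proof -
    have "(2 * \<gamma>) * (real CARD('p) * real N * l2_inner g1 g1)
        \<le> ((1 - \<beta>) * (1 - real CARD('p) powr (-1/2))) * (real CARD('p) * real N * l2_inner g1 g1)"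
      using min.cobounded2[of "1 - \<beta>" "(1 - \<beta>) * (1 - real CARD('p) powr (-1/2)) / 2"]
      by (intro mult_right_mono) (simp_all add: \<gamma>_def l2_inner_self_nonneg)
    also have "\<dots> \<le> (\<Sum>j<N. coset_energy (a j) g1)"
      using coset_energy_bound_fibre_sum_zero[OF g1 N mass] by (simp add: mult_ac)
    finally show ?thesis by (simp add: mult_ac)
  qed
  have "coset_energy b f = coset_energy b g0 + coset_energy b g1" for b
    unfolding coset_energy_add_fibre_orthogonal[OF g0(1) g1, symmetric] split[symmetric]
    by (rule coset_energy_demean[symmetric])
  then have "(\<Sum>j<N. coset_energy (a j) f) = (\<Sum>j<N. coset_energy (a j) g0) + (\<Sum>j<N. coset_energy (a j) g1)"
    by (simp add: sum.distrib)
  moreover have "l2_inner (demean f) (demean f) = l2_inner g0 g0 + l2_inner g1 g1"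
    by (simp only: split l2_inner_add_self_fibre_orthogonal[OF g0(1) g1])
  ultimately show ?thesis
    unfolding \<gamma>_def[symmetric] using add_mono[OF g0_bound g1_bound] by (simp only: distrib_left)
qed

section \<open>The Dirichlet form of the walk\<close>

definition walk_measure :: "nat \<Rightarrow> (nat \<Rightarrow> ('n, 'p) heis) \<Rightarrow> ('n, 'p) heis \<Rightarrow> real" where
  "walk_measure N a g = (1 / real N) * (\<Sum>j<N. unif (cyc \<omega> (a j)) g)"

definition walk_kernel :: "nat \<Rightarrow> (nat \<Rightarrow> ('n, 'p) heis) \<Rightarrow> ('n, 'p) heis \<Rightarrow> ('n, 'p) heis \<Rightarrow> real" where
  "walk_kernel N a x y
    = (1/2) * (Rker (hmul \<omega>) (walk_measure N a) x y + Lker (hmul \<omega>) (walk_measure N a) x y)"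

lemma Rker_hmul: "Rker (hmul \<omega>) \<nu> x y = \<nu> (- x \<cdot> y)"
proof -
  have "{g. x \<cdot> g = y} = {- x \<cdot> y}" by auto
  then show ?thesis by (simp add: Rker_def)
qed

lemma Lker_hmul: "Lker (hmul \<omega>) \<nu> x y = \<nu> (y \<cdot> - x)"
proof -
  have "{g. g \<cdot> x = y} = {y \<cdot> - x}" by auto
  then show ?thesis by (simp add: Lker_def)
qed

lemma sum_unif_cyc: "(\<Sum>g\<in>UNIV. unif (cyc \<omega> a) g * F g) = (\<Sum>t\<in>UNIV. F (hpow_mod a t)) / real CARD('p)"
proof (cases "a = 0")
  case True
  then have "hpow_mod a t = 0" for t by (simp add: hpow_mod_def zero_prod_def)
  then show ?thesis by (simp add: cyc_eq_range_hpow_mod sum_unif)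
next
  case False
  then have "inj (hpow_mod a)" by (rule inj_hpow_mod)
  then show ?thesis by (simp add: cyc_eq_range_hpow_mod sum_unif card_image sum.reindex)
qed

lemma sum_walk_measure:
  "(\<Sum>g\<in>UNIV. walk_measure N a g * F g)
    = (\<Sum>j<N. \<Sum>t\<in>UNIV. F (hpow_mod (a j) t)) / (real N * real CARD('p))"
proof -
  have "(\<Sum>g\<in>UNIV. walk_measure N a g * F g) = (\<Sum>j<N. \<Sum>g\<in>UNIV. unif (cyc \<omega> (a j)) g * F g) / real N"
    by (simp add: walk_measure_def sum_distrib_right sum.swap[of _ "{..<N}"] sum_divide_distrib)
  also have "\<dots> = (\<Sum>j<N. (\<Sum>t\<in>UNIV. F (hpow_mod (a j) t)) / real CARD('p)) / real N"
    by (simp only: sum_unif_cyc)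
  finally show ?thesis
    by (simp add: sum_divide_distrib[symmetric] divide_divide_eq_left mult.commute)
qed

lemma coset_energy_uminus:
  "coset_energy a (f \<circ> uminus) = (\<Sum>x\<in>UNIV. \<Sum>t\<in>UNIV. (f x - f (hpow_mod a t \<cdot> x))\<^sup>2)"
proof -
  have "coset_energy a (f \<circ> uminus) = (\<Sum>x\<in>UNIV. \<Sum>t\<in>UNIV. (f (- x) - f (hpow_mod a (- t) \<cdot> - x))\<^sup>2)"
    by (simp add: coset_energy_def minus_mul uminus_hpow_mod)
  also have "\<dots> = (\<Sum>x\<in>UNIV. \<Sum>t\<in>UNIV. (f (- x) - f (hpow_mod a t \<cdot> - x))\<^sup>2)"
    by (intro sum.cong refl sum_UNIV_uminus[where F="\<lambda>t. (f (- _) - f (hpow_mod a t \<cdot> - _))\<^sup>2"])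
  also have "\<dots> = (\<Sum>x\<in>UNIV. \<Sum>t\<in>UNIV. (f x - f (hpow_mod a t \<cdot> x))\<^sup>2)"
    by (rule sum_UNIV_uminus)
  finally show ?thesis .
qed

lemma dirichlet_walk_kernel:
  "dirichlet (walk_kernel N a) (\<lambda>_. 1 / real CARD(('n, 'p) heis)) f
    = (\<Sum>j<N. coset_energy (a j) f + coset_energy (a j) (f \<circ> uminus))
      / (4 * real CARD(('n, 'p) heis) * real N * real CARD('p))"
proof -
  define c where "c = 4 * real CARD(('n, 'p) heis) * real N * real CARD('p)"
  have right: "(\<Sum>y\<in>UNIV. walk_measure N a (- x \<cdot> y) * (f x - f y)\<^sup>2)
      = (\<Sum>j<N. \<Sum>t\<in>UNIV. (f x - f (x \<cdot> hpow_mod (a j) t))\<^sup>2) / (real N * real CARD('p))" for x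
    using sum_mul_left[of "\<lambda>y. walk_measure N a (- x \<cdot> y) * (f x - f y)\<^sup>2" x]
    by (simp add: sum_walk_measure)
  have left: "(\<Sum>y\<in>UNIV. walk_measure N a (y \<cdot> - x) * (f x - f y)\<^sup>2)
      = (\<Sum>j<N. \<Sum>t\<in>UNIV. (f x - f (hpow_mod (a j) t \<cdot> x))\<^sup>2) / (real N * real CARD('p))" for x
    using sum_mul_right[of "\<lambda>y. walk_measure N a (y \<cdot> - x) * (f x - f y)\<^sup>2" x]
    by (simp add: sum_walk_measure)
  have "dirichlet (walk_kernel N a) (\<lambda>_. 1 / real CARD(('n, 'p) heis)) f
      = (\<Sum>x\<in>UNIV. (\<Sum>y\<in>UNIV. walk_measure N a (- x \<cdot> y) * (f x - f y)\<^sup>2)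
          + (\<Sum>y\<in>UNIV. walk_measure N a (y \<cdot> - x) * (f x - f y)\<^sup>2))
        / (4 * real CARD(('n, 'p) heis))"
    by (simp add: dirichlet_def walk_kernel_def Rker_hmul Lker_hmul sum_distrib_left
        sum_divide_distrib add_divide_distrib sum.distrib algebra_simps)
  also have "\<dots> = (\<Sum>x\<in>UNIV. (\<Sum>j<N. \<Sum>t\<in>UNIV. (f x - f (x \<cdot> hpow_mod (a j) t))\<^sup>2)
        + (\<Sum>j<N. \<Sum>t\<in>UNIV. (f x - f (hpow_mod (a j) t \<cdot> x))\<^sup>2)) / (real N * real CARD('p))
        / (4 * real CARD(('n, 'p) heis))"
    by (simp only: right left add_divide_distrib[symmetric] sum_divide_distrib[symmetric])
  also have "\<dots> = (\<Sum>x\<in>UNIV. \<Sum>j<N. \<Sum>t\<in>UNIV.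
        (f x - f (x \<cdot> hpow_mod (a j) t))\<^sup>2 + (f x - f (hpow_mod (a j) t \<cdot> x))\<^sup>2) / c"
    unfolding c_def divide_divide_eq_left by (simp add: sum.distrib mult_ac)
  also have "\<dots> = (\<Sum>j<N. coset_energy (a j) f + coset_energy (a j) (f \<circ> uminus)) / c"
    unfolding coset_energy_uminus by (simp add: coset_energy_def sum.distrib sum.swap[of _ "{..<N}"])
  finally show ?thesis by (simp add: c_def)
qed

lemma poincare_walk_kernel:
  assumes N: "N \<ge> 1" and mass: "\<And>L. hyperplaneW L \<Longrightarrow> empirical_mass N (fst \<circ> a) L \<le> \<beta>"
  shows "min (1 - \<beta>) ((1 - \<beta>) * (1 - real CARD('p) powr (-1/2)) / 2)
      * variance_wrt (\<lambda>_. 1 / real CARD(('n, 'p) heis)) f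
    \<le> dirichlet (walk_kernel N a) (\<lambda>_. 1 / real CARD(('n, 'p) heis)) f"
proof -
  define \<gamma> where "\<gamma> = min (1 - \<beta>) ((1 - \<beta>) * (1 - real CARD('p) powr (-1/2)) / 2)"
  define V where "V = l2_inner (demean f) (demean f)"
  have "bij (uminus :: ('n, 'p) heis \<Rightarrow> _)"
    by (rule bij_betwI[where g=uminus]) auto
  then have "l2_inner (demean (f \<circ> uminus)) (demean (f \<circ> uminus)) = V"
    by (simp add: V_def demean_reindex l2_inner_reindex)
  then have "4 * real CARD('p) * real N * \<gamma> * V
      \<le> (\<Sum>j<N. coset_energy (a j) f + coset_energy (a j) (f \<circ> uminus))"
    using coset_energy_bound[OF N mass, of f] coset_energy_bound[OF N mass, of "f \<circ> uminus"]
    by (simp add: \<gamma>_def V_def sum.distrib)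
  then have "4 * real CARD('p) * real N * \<gamma> * V / (4 * real CARD(('n, 'p) heis) * real N * real CARD('p))
      \<le> (\<Sum>j<N. coset_energy (a j) f + coset_energy (a j) (f \<circ> uminus))
        / (4 * real CARD(('n, 'p) heis) * real N * real CARD('p))"
    by (rule divide_right_mono) simp
  also have "\<dots> = dirichlet (walk_kernel N a) (\<lambda>_. 1 / real CARD(('n, 'p) heis)) f"
    by (rule dirichlet_walk_kernel[symmetric])
  finally have "4 * real CARD('p) * real N * \<gamma> * V / (4 * real CARD(('n, 'p) heis) * real N * real CARD('p))
      \<le> dirichlet (walk_kernel N a) (\<lambda>_. 1 / real CARD(('n, 'p) heis)) f" .
  moreover have "4 * real CARD('p) * real N * \<gamma> * V / (4 * real CARD(('n, 'p) heis) * real N * real CARD('p))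
      = \<gamma> * variance_wrt (\<lambda>_. 1 / real CARD(('n, 'p) heis)) f"
    using N unfolding variance_wrt_uniform V_def by (simp add: field_simps)
  ultimately show ?thesis by (simp add: \<gamma>_def)
qed


lemma spectral_gap_walk_kernel:
  assumes "N \<ge> 1" and "\<And>L. hyperplaneW L \<Longrightarrow> empirical_mass N (fst \<circ> a) L \<le> \<beta>"
  shows "min (1 - \<beta>) ((1 - \<beta>) * (1 - real CARD('p) powr (-1/2)) / 2)
    \<le> spectral_gap (walk_kernel N a) (\<lambda>_. 1 / real CARD(('n, 'p) heis))"
  by (rule spectral_gap_ge[OF poincare_walk_kernel[OF assms]
        variance_wrt_uniform_indicator_pos[OF card_heis_ge_two, of 0]])

end

lemma gap_constant_bounds:
  fixes p \<beta> :: real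
  assumes p: "p \<ge> 2" and \<beta>: "1 / p < \<beta>" "\<beta> < 1"
  shows "0 < min (1 - \<beta>) ((1 - \<beta>)\<^sup>2 / 2 * (1 - p powr (-1/2)))"
    and "min (1 - \<beta>) ((1 - \<beta>)\<^sup>2 / 2 * (1 - p powr (-1/2)))
      \<le> min (1 - \<beta>) ((1 - \<beta>) * (1 - p powr (-1/2)) / 2)"
proof -
  have s: "0 < p powr (-1/2)" "p powr (-1/2) < 1"
    using p by (auto simp: powr_minus_divide powr_half_sqrt)
  then show "0 < min (1 - \<beta>) ((1 - \<beta>)\<^sup>2 / 2 * (1 - p powr (-1/2)))"
    using \<beta>(2) by simp
  have "0 < 1 / p" using p by simp
  with \<beta>(1) have "0 < \<beta>" by linarith
  with \<beta>(2) have "(1 - \<beta>)\<^sup>2 \<le> 1 - \<beta>"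
    using mult_left_le_one_le[of "1 - \<beta>" "1 - \<beta>"] by (simp add: power2_eq_square)
  with s show "min (1 - \<beta>) ((1 - \<beta>)\<^sup>2 / 2 * (1 - p powr (-1/2)))
      \<le> min (1 - \<beta>) ((1 - \<beta>) * (1 - p powr (-1/2)) / 2)"
    by (intro min.mono) (auto intro: mult_right_mono)
qed

theorem proposition4p14:
  fixes \<omega> :: "('n::finite, 'p::prime_card) vecW \<Rightarrow> ('n, 'p) vecW \<Rightarrow> 'p mod_ring"
    and \<beta> :: real and N :: nat and a :: "nat \<Rightarrow> ('n, 'p) heis"
  assumes p_odd: "odd CARD('p)"
    and dimW: "even CARD('n)" "CARD('n) \<ge> 2"
    and form: "alt_form \<omega>"
    and beta: "1 / real CARD('p) < \<beta>" "\<beta> < 1"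
    and N: "N \<ge> 1"
    and hyp: "\<And>L. hyperplaneW L \<Longrightarrow> real (card {j\<in>{..<N}. fst (a j) \<in> L}) / real N \<le> \<beta>"
  shows "let \<nu> = (\<lambda>g. (1 / real N) * (\<Sum>j<N. unif (cyc \<omega> (a j)) g));
             K = (\<lambda>x y. (1/2) * (Rker (hmul \<omega>) \<nu> x y + Lker (hmul \<omega>) \<nu> x y));
             \<rho> = (\<lambda>x::('n, 'p) heis. 1 / real CARD(('n, 'p) heis));
             \<gamma> = min (1 - \<beta>) ((1 - \<beta>)\<^sup>2 / 2 * (1 - real CARD('p) powr (-1/2)))
         in \<gamma> > 0 \<and> spectral_gap K \<rho> \<ge> \<gamma>"
proof -
  interpret heisenberg \<omega> using form p_odd by unfold_locales
  have mass: "empirical_mass N (fst \<circ> a) L \<le> \<beta>" if "hyperplaneW L" for L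
    using hyp[OF that] by (simp add: empirical_mass_def)
  have kernel: "(\<lambda>x y. (1/2) * (Rker (hmul \<omega>) (\<lambda>g. (1 / real N) * (\<Sum>j<N. unif (cyc \<omega> (a j)) g)) x y
      + Lker (hmul \<omega>) (\<lambda>g. (1 / real N) * (\<Sum>j<N. unif (cyc \<omega> (a j)) g)) x y)) = walk_kernel N a"
    by (simp add: fun_eq_iff walk_kernel_def walk_measure_def[abs_def])
  have "real CARD('p) \<ge> 2" using prime_card[where 'a='p] prime_ge_2_nat by simp
  note \<gamma> = gap_constant_bounds[OF this beta]
  show ?thesis
    unfolding Let_def kernel
    using \<gamma>(1) order_trans[OF \<gamma>(2) spectral_gap_walk_kernel[OF N mass]] by (rule conjI)
qed

end
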